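(* Let $\boldsymbol{f}\in\mathbb{R}^E$ satisfy $\boldsymbol{u}^-_e<\boldsymbol{f}_e<\boldsymbol{u}^+_e$ for all $e$ and $\boldsymbol{c}^\top\boldsymbol{f}>F^*$. Let $\tilde{\boldsymbol{g}}\in\mathbb{R}^E$ satisfy $\|\mathbf{L}(\boldsymbol{f})^{-1}(\tilde{\boldsymbol{g}}-\boldsymbol{g}(\boldsymbol{f}))\|_\infty\le\kappa/8$ for some $\kappa\in(0,1)$, and $\tilde{\boldsymbol{\ell}}\in\mathbb{R}^E_{>0}$ satisfy $\tilde{\boldsymbol{\ell}}\approx_2\boldsymbol{\ell}(\boldsymbol{f})$. Let $\boldsymbol{\Delta}$ satisfy $\mathbf{B}^\top\boldsymbol{\Delta}=0$ and $\tilde{\boldsymbol{g}}^\top\boldsymbol{\Delta}/\|\tilde{\mathbf{L}}\boldsymbol{\Delta}\|_1\le-\kappa$, and let $\eta$ satisfy $\eta\,\tilde{\boldsymbol{g}}^\top\boldsymbol{\Delta}=-\kappa^2/50$. Then $\Phi(\boldsymbol{f}+\eta\boldsymbol{\Delta})\le\Phi(\boldsymbol{f})-\kappa^2/500$.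
   Context: Setting: $G=(V,E)$ is a directed graph with $m=|E|$ edges and edge-vertex incidence matrix $\mathbf{B}$ (row of edge $(a,b)$ has $+1$ at $a$, $-1$ at $b$); demands $\boldsymbol{d}\in\mathbb{Z}^V$, lower/upper capacities $\boldsymbol{u}^-,\boldsymbol{u}^+\in\mathbb{Z}^E$, and costs $\boldsymbol{c}\in\mathbb{Z}^E$ are integers bounded in absolute value by $U$. $F^*=\min\{\boldsymbol{c}^\top\boldsymbol{f}:\mathbf{B}^\top\boldsymbol{f}=\boldsymbol{d},\ \boldsymbol{u}^-\le\boldsymbol{f}\le\boldsymbol{u}^+\}$. Let $\alpha=1/(1000\log(mU))$ and $\Phi(\boldsymbol{f})=20m\log(\boldsymbol{c}^\top\boldsymbol{f}-F^* )+\sum_{e\in E}\big((\boldsymbol{u}^+_e-\boldsymbol{f}_e)^{-\alpha}+(\boldsymbol{f}_e-\boldsymbol{u}^-_e)^{-\alpha}\big)$. Lengths: $\boldsymbol{\ell}(\boldsymbol{f})_e=(\boldsymbol{u}^+_e-\boldsymbol{f}_e)^{-1-\alpha}+(\boldsymbol{f}_e-\boldsymbol{u}^-_e)^{-1-\alpha}$; gradients $\boldsymbol{g}(\boldsymbol{f})=\nabla\Phi(\boldsymbol{f})$, i.e. $\boldsymbol{g}(\boldsymbol{f})_e=20m(\boldsymbol{c}^\top\boldsymbol{f}-F^* )^{-1}\boldsymbol{c}_e+\alpha(\boldsymbol{u}^+_e-\boldsymbol{f}_e)^{-1-\alpha}-\alpha(\boldsymbol{f}_e-\boldsymbol{u}^-_e)^{-1-\alpha}$.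 $\mathbf{L}(\boldsymbol{f})=\mathrm{diag}(\boldsymbol{\ell}(\boldsymbol{f}))$, $\tilde{\mathbf{L}}=\mathrm{diag}(\tilde{\boldsymbol{\ell}})$. For positive vectors, $\boldsymbol{x}\approx_\beta\boldsymbol{y}$ means $\beta^{-1}\boldsymbol{y}_i\le\boldsymbol{x}_i\le\beta\boldsymbol{y}_i$ for all $i$. *)

theory Defs
  imports "HOL-Analysis.Analysis"
begin

text \<open>Directed (multi)graph: vertex set V, edge set E, each edge e goes from
  src e to tgt e.  Vectors in R^E / R^V are functions, only their values on E / V matter.\<close>

definition incid :: "('e \<Rightarrow> 'v) \<Rightarrow> ('e \<Rightarrow> 'v) \<Rightarrow> 'e \<Rightarrow> 'v \<Rightarrow> real" where
  "incid src tgt e v = (if src e = v then 1 else 0) - (if tgt e = v then 1 else 0)"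

definition BT :: "'e set \<Rightarrow> ('e \<Rightarrow> 'v) \<Rightarrow> ('e \<Rightarrow> 'v) \<Rightarrow> ('e \<Rightarrow> real) \<Rightarrow> 'v \<Rightarrow> real" where
  "BT E src tgt f v = (\<Sum>e\<in>E. incid src tgt e v * f e)"

definition cost :: "'e set \<Rightarrow> ('e \<Rightarrow> int) \<Rightarrow> ('e \<Rightarrow> real) \<Rightarrow> real" where
  "cost E c f = (\<Sum>e\<in>E. real_of_int (c e) * f e)"

definition Fstar :: "'v set \<Rightarrow> 'e set \<Rightarrow> ('e \<Rightarrow> 'v) \<Rightarrow> ('e \<Rightarrow> 'v) \<Rightarrow> ('v \<Rightarrow> int)
    \<Rightarrow> ('e \<Rightarrow> int) \<Rightarrow> ('e \<Rightarrow> int) \<Rightarrow> ('e \<Rightarrow> int) \<Rightarrow> real" where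
  "Fstar V E src tgt d lo up c =
     Inf {cost E c f | f. (\<forall>v\<in>V. BT E src tgt f v = real_of_int (d v)) \<and>
                          (\<forall>e\<in>E. real_of_int (lo e) \<le> f e \<and> f e \<le> real_of_int (up e))}"

definition alpha :: "nat \<Rightarrow> int \<Rightarrow> real" where
  "alpha m U = 1 / (1000 * ln (real m * real_of_int U))"

definition Phi :: "real \<Rightarrow> real \<Rightarrow> 'e set \<Rightarrow> ('e \<Rightarrow> int) \<Rightarrow> ('e \<Rightarrow> int) \<Rightarrow> ('e \<Rightarrow> int)
    \<Rightarrow> ('e \<Rightarrow> real) \<Rightarrow> real" where
  "Phi a Fs E lo up c f =
     20 * real (card E) * ln (cost E c f - Fs)
     + (\<Sum>e\<in>E. (real_of_int (up e) - f e) powr (-a) + (f e - real_of_int (lo e)) powr (-a))"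

definition lens :: "real \<Rightarrow> ('e \<Rightarrow> int) \<Rightarrow> ('e \<Rightarrow> int) \<Rightarrow> ('e \<Rightarrow> real) \<Rightarrow> 'e \<Rightarrow> real" where
  "lens a lo up f e =
     (real_of_int (up e) - f e) powr (-1 - a) + (f e - real_of_int (lo e)) powr (-1 - a)"

definition grad :: "real \<Rightarrow> real \<Rightarrow> 'e set \<Rightarrow> ('e \<Rightarrow> int) \<Rightarrow> ('e \<Rightarrow> int) \<Rightarrow> ('e \<Rightarrow> int)
    \<Rightarrow> ('e \<Rightarrow> real) \<Rightarrow> 'e \<Rightarrow> real" where
  "grad a Fs E lo up c f e =
     20 * real (card E) * real_of_int (c e) / (cost E c f - Fs)
     + a * (real_of_int (up e) - f e) powr (-1 - a)
     - a * (f e - real_of_int (lo e)) powr (-1 - a)"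

end

(*
  Put delta = eta * Delta and measure it in the local norm R = sum_e l_e |delta_e| with
  l = l(f). The step rule together with g~ Delta <= -kappa |L~ Delta|_1 and l~ ~_2 l gives
  R <= kappa/25. Every slack s is at most 2U, and alpha log(mU) = 1/1000, so s^alpha <= 2;
  a second-order bound on s^(-alpha) then shows that the barrier part of Phi exceeds its
  linearisation by at most 4 R^2, while the concave logarithmic part lies below its
  tangent. Hence Phi(f + delta) <= Phi(f) + g(f) delta + 4 R^2, and g(f) delta differs
  from g~ delta = -kappa^2/50 by at most (kappa/8) R, leaving a decrease of kappa^2/500.
*)

theory Submission
  imports Defs
begin

lemma powr_le_1_plus_mult:
  fixes b a :: real
  assumes "0 < b" "0 \<le> a" "a \<le> 1"
  shows "b powr a \<le> 1 + a * (b - 1)"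
  using Youngs_inequality_0[of a "1 - a" b 1] assms by (simp add: algebra_simps)

lemma powr_neg_second_order_le:
  fixes z t a :: real
  assumes z: "0 < z" and t: "t \<le> z / 2" and a: "0 \<le> a" "a \<le> 1"
  shows "(z - t) powr (-a) \<le> z powr (-a) + a * z powr (-1-a) * t + 2 * a * z powr (-2-a) * t\<^sup>2"
proof -
  define s where "s = t / z"
  have s: "s \<le> 1/2" using t z by (simp add: s_def divide_le_eq)
  have "z - t = z * (1 - s)" using z by (simp add: s_def field_simps)
  then have "(z - t) powr (-a) = z powr (-a) * (1 / (1 - s)) powr a"
    using z s by (simp add: powr_mult powr_minus_divide powr_divide)
  also have "(1 / (1 - s)) powr a \<le> 1 + a * (s + 2 * s\<^sup>2)"
  proof -
    have "1 / (1 - s) - 1 = s + s\<^sup>2 / (1 - s)"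
      using s by (simp add: field_simps power2_eq_square)
    also have "s\<^sup>2 / (1 - s) \<le> 2 * s\<^sup>2"
    proof -
      have "s\<^sup>2 * 1 \<le> s\<^sup>2 * (2 * (1 - s))" using s by (intro mult_left_mono) auto
      then show ?thesis using s by (simp add: divide_le_eq algebra_simps)
    qed
    finally have "a * (1 / (1 - s) - 1) \<le> a * (s + 2 * s\<^sup>2)"
      using a by (intro mult_left_mono) auto
    then show ?thesis using powr_le_1_plus_mult[of "1 / (1 - s)" a] s a by simp
  qed
  finally have "(z - t) powr (-a) \<le> z powr (-a) * (1 + a * (s + 2 * s\<^sup>2))"
    by (simp add: mult_left_mono)
  also have "\<dots> = z powr (-a) + a * z powr (-1-a) * t + 2 * a * z powr (-2-a) * t\<^sup>2"
  proof -
    have "-1 - a = -a - 1" "-2 - a = -a - 2" by simp_all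
    then have "z powr (-1-a) = z powr (-a) / z" "z powr (-2-a) = z powr (-a) / z\<^sup>2"
      using z by (simp_all only: powr_diff) simp_all
    then show ?thesis using z by (simp add: s_def field_simps power2_eq_square)
  qed
  finally show ?thesis .
qed

lemma powr_neg_second_order_le_relative:
  fixes z t a :: real
  assumes z: "0 < z" and a: "0 \<le> a" "a \<le> 1" and za: "z powr a \<le> 2"
    and small: "z powr (-1-a) * \<bar>t\<bar> \<le> 1/4"
  shows "(z - t) powr (-a) \<le> z powr (-a) + a * z powr (-1-a) * t + 4 * a * (z powr (-1-a) * t)\<^sup>2"
proof -
  have "-1 - a = -a - 1" "-2 - a = -a - 2" by simp_all
  then have scale1: "z powr (-1-a) * z powr a * z = 1" and scale2: "z powr (-2-a) = (z powr (-1-a))\<^sup>2 * z powr a"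
    using z by (simp_all add: powr_diff powr_minus_divide power2_eq_square field_simps)
  have "\<bar>t\<bar> = (z powr (-1-a) * \<bar>t\<bar>) * z powr a * z"
    using scale1 by (simp add: algebra_simps)
  also have "\<dots> \<le> 1/4 * 2 * z"
    using small za z by (intro mult_mono) auto
  finally have "t \<le> z / 2" by simp
  then have "(z - t) powr (-a) \<le> z powr (-a) + a * z powr (-1-a) * t + 2 * a * (z powr (-2-a) * t\<^sup>2)"
    using powr_neg_second_order_le[of z t a] z a by simp
  also have "z powr (-2-a) * t\<^sup>2 \<le> 2 * (z powr (-1-a) * t)\<^sup>2"
  proof -
    have "(z powr (-1-a) * t)\<^sup>2 * z powr a \<le> (z powr (-1-a) * t)\<^sup>2 * 2"
      using za by (intro mult_left_mono) auto
    then show ?thesis by (simp add: scale2 power_mult_distrib algebra_simps)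
  qed
  finally show ?thesis using a by (simp add: mult_left_mono)
qed

lemma barrier_pair_second_order_le:
  fixes x y t a :: real
  assumes "0 < x" "0 < y" "0 \<le> a" "a \<le> 1" "x powr a \<le> 2" "y powr a \<le> 2"
    and "(x powr (-1-a) + y powr (-1-a)) * \<bar>t\<bar> \<le> 1/4"
  shows "(x - t) powr (-a) + (y + t) powr (-a)
    \<le> x powr (-a) + y powr (-a) + a * (x powr (-1-a) - y powr (-1-a)) * t
      + 4 * a * ((x powr (-1-a) + y powr (-1-a)) * t)\<^sup>2"
proof -
  have "0 \<le> x powr (-1-a) * \<bar>t\<bar>" "0 \<le> y powr (-1-a) * \<bar>t\<bar>" by simp_all
  then have "x powr (-1-a) * \<bar>t\<bar> \<le> 1/4" "y powr (-1-a) * \<bar>t\<bar> \<le> 1/4"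
    using assms(7) unfolding distrib_right by linarith+
  then have x_step: "(x - t) powr (-a) \<le> x powr (-a) + a * x powr (-1-a) * t + 4 * a * (x powr (-1-a) * t)\<^sup>2"
    and y_step: "(y + t) powr (-a) \<le> y powr (-a) - a * y powr (-1-a) * t + 4 * a * (y powr (-1-a) * t)\<^sup>2"
    using assms powr_neg_second_order_le_relative[of x a t] powr_neg_second_order_le_relative[of y a "-t"]
    by simp_all
  have "0 \<le> (t * t) * (x powr (-1-a) * y powr (-1-a))"
    by (rule mult_nonneg_nonneg) simp_all
  then have "(x powr (-1-a) * t)\<^sup>2 + (y powr (-1-a) * t)\<^sup>2 \<le> ((x powr (-1-a) + y powr (-1-a)) * t)\<^sup>2"
    by (simp add: power2_eq_square algebra_simps)
  then have "4 * a * ((x powr (-1-a) * t)\<^sup>2 + (y powr (-1-a) * t)\<^sup>2)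
      \<le> 4 * a * ((x powr (-1-a) + y powr (-1-a)) * t)\<^sup>2"
    using assms(3) by (intro mult_left_mono) auto
  with x_step y_step show ?thesis by (simp add: algebra_simps)
qed

lemma abs_barrier_grad_le:
  fixes x y a :: real
  assumes "0 \<le> a" "a \<le> 1"
  shows "\<bar>a * (x powr (-1-a) - y powr (-1-a))\<bar> \<le> x powr (-1-a) + y powr (-1-a)"
proof -
  have "0 \<le> a * x powr (-1-a)" "0 \<le> a * y powr (-1-a)" using assms by simp_all
  moreover have "a * x powr (-1-a) \<le> x powr (-1-a)" "a * y powr (-1-a) \<le> y powr (-1-a)"
    using assms by (simp_all add: mult_left_le_one_le)
  ultimately show ?thesis
    unfolding right_diff_distrib abs_le_iff by (intro conjI; linarith)
qed

lemma barrier_sum_second_order_le: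
  fixes x y t :: "'e \<Rightarrow> real" and a :: real
  assumes "finite E" "0 \<le> a" "a \<le> 1"
    and slacks: "\<forall>e\<in>E. 0 < x e \<and> 0 < y e \<and> x e powr a \<le> 2 \<and> y e powr a \<le> 2"
    and small: "(\<Sum>e\<in>E. (x e powr (-1-a) + y e powr (-1-a)) * \<bar>t e\<bar>) \<le> 1/4"
  shows "(\<Sum>e\<in>E. (x e - t e) powr (-a) + (y e + t e) powr (-a))
    \<le> (\<Sum>e\<in>E. x e powr (-a) + y e powr (-a)) + (\<Sum>e\<in>E. a * (x e powr (-1-a) - y e powr (-1-a)) * t e)
      + 4 * (\<Sum>e\<in>E. (x e powr (-1-a) + y e powr (-1-a)) * \<bar>t e\<bar>)\<^sup>2"
proof -
  define w where "w e = (x e powr (-1-a) + y e powr (-1-a)) * \<bar>t e\<bar>" for e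
  define W where "W = (\<Sum>e\<in>E. w e)"
  have w_nonneg: "0 \<le> w e" for e by (simp add: w_def)
  have w_le: "w e \<le> W" if "e \<in> E" for e
    unfolding W_def using assms(1) that w_nonneg by (intro member_le_sum) auto
  have pointwise: "(\<Sum>e\<in>E. (x e - t e) powr (-a) + (y e + t e) powr (-a))
    \<le> (\<Sum>e\<in>E. x e powr (-a) + y e powr (-a) + a * (x e powr (-1-a) - y e powr (-1-a)) * t e + 4 * a * (w e)\<^sup>2)"
  proof (rule sum_mono)
    fix e assume e: "e \<in> E"
    then have "w e \<le> 1/4" using w_le small unfolding W_def w_def by fastforce
    then show "(x e - t e) powr (-a) + (y e + t e) powr (-a)
      \<le> x e powr (-a) + y e powr (-a) + a * (x e powr (-1-a) - y e powr (-1-a)) * t e + 4 * a * (w e)\<^sup>2"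
      using barrier_pair_second_order_le[of "x e" "y e" a "t e"] slacks e assms(2,3)
      by (simp add: w_def power_mult_distrib)
  qed
  have "(\<Sum>e\<in>E. a * (w e)\<^sup>2) \<le> (\<Sum>e\<in>E. W * w e)"
  proof (rule sum_mono)
    fix e assume e: "e \<in> E"
    have "a * w e \<le> W" using w_le[OF e] w_nonneg[of e] assms(2,3) mult_left_le_one_le by (metis order_trans)
    then show "a * (w e)\<^sup>2 \<le> W * w e"
      using w_nonneg[of e] by (simp add: power2_eq_square mult_right_mono flip: mult.assoc)
  qed
  also have "(\<Sum>e\<in>E. W * w e) = W\<^sup>2"
    by (simp add: W_def sum_distrib_left power2_eq_square)
  finally have "(\<Sum>e\<in>E. 4 * a * (w e)\<^sup>2) \<le> 4 * W\<^sup>2"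
    by (simp add: sum_distrib_left[symmetric] mult.assoc)
  with pointwise show ?thesis by (simp add: sum.distrib W_def w_def)
qed

lemma ln_le_tangent:
  fixes G C :: real
  assumes "0 < G" "0 < G + C"
  shows "ln (G + C) \<le> ln G + C / G"
proof -
  have "ln ((G + C) / G) \<le> (G + C) / G - 1" using assms by (intro ln_le_minus_one) simp
  then show ?thesis using assms by (simp add: ln_div field_simps)
qed

lemma abs_sum_mult_le_weighted:
  fixes u v w :: "'e \<Rightarrow> real"
  assumes "\<forall>e\<in>E. \<bar>u e\<bar> \<le> \<epsilon> * w e"
  shows "\<bar>\<Sum>e\<in>E. u e * v e\<bar> \<le> \<epsilon> * (\<Sum>e\<in>E. w e * \<bar>v e\<bar>)"
proof -
  have "\<bar>\<Sum>e\<in>E. u e * v e\<bar> \<le> (\<Sum>e\<in>E. \<bar>u e\<bar> * \<bar>v e\<bar>)"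
    using sum_abs[of "\<lambda>e. u e * v e" E] by (simp add: abs_mult)
  also have "\<dots> \<le> (\<Sum>e\<in>E. \<epsilon> * w e * \<bar>v e\<bar>)"
    using assms by (intro sum_mono mult_right_mono) auto
  finally show ?thesis by (simp add: sum_distrib_left mult.assoc)
qed

lemma abs_sum_mult_diff_le_weighted:
  fixes g h l \<delta> :: "'e \<Rightarrow> real"
  assumes "\<forall>e\<in>E. \<bar>h e - g e\<bar> / l e \<le> \<epsilon>" "\<forall>e\<in>E. 0 < l e"
  shows "\<bar>(\<Sum>e\<in>E. g e * \<delta> e) - (\<Sum>e\<in>E. h e * \<delta> e)\<bar> \<le> \<epsilon> * (\<Sum>e\<in>E. l e * \<bar>\<delta> e\<bar>)"
proof -
  have "\<forall>e\<in>E. \<bar>g e - h e\<bar> \<le> \<epsilon> * l e"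
    using assms by (simp add: divide_le_eq abs_minus_commute)
  then show ?thesis
    using abs_sum_mult_le_weighted[of E "\<lambda>e. g e - h e" \<epsilon> l \<delta>]
    by (simp add: sum_subtractf left_diff_distrib)
qed

lemma lens_pos:
  "real_of_int (lo e) < f e \<Longrightarrow> f e < real_of_int (up e) \<Longrightarrow> 0 < lens a lo up f e"
  by (simp add: lens_def add_pos_pos)

lemma product_eq_1_or_ge_2:
  assumes "1 \<le> m" "1 \<le> U"
  obtains "real m * real_of_int U = 1" | "2 \<le> real m * real_of_int U"
proof -
  have "1 * 1 \<le> int m * U" using assms by (intro mult_mono) auto
  then consider "int m * U = 1" | "2 \<le> int m * U" by linarith
  then show ?thesis
  proof cases
    case 1
    then have "real_of_int (int m * U) = 1" by simp
    then show ?thesis using that(1) by simp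
  next
    case 2
    then have "2 \<le> real_of_int (int m * U)" by linarith
    then show ?thesis using that(2) by simp
  qed
qed

lemma alpha_nonneg_le_1:
  assumes "1 \<le> m" "1 \<le> U"
  shows "0 \<le> alpha m U \<and> alpha m U \<le> 1"
  using assms
proof (cases rule: product_eq_1_or_ge_2)
  case 2
  have "exp (1/1000) \<le> (2::real)" using exp_bound_half[of "1/1000::real"] by simp
  then have "1/1000 \<le> ln (real m * real_of_int U)"
    using 2 by (subst ln_ge_iff) auto
  then show ?thesis by (simp add: alpha_def field_simps)
qed (simp add: alpha_def) \<comment> \<open>for m U = 1 the junk value 1/0 = 0 makes alpha vanish\<close>

lemma powr_alpha_le_2:
  assumes "1 \<le> m" "1 \<le> U" "0 < z" "z \<le> 2 * real_of_int U"
  shows "z powr alpha m U \<le> 2"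
  using assms(1,2)
proof (cases rule: product_eq_1_or_ge_2)
  case 1
  then show ?thesis using assms(3) by (simp add: alpha_def)
next
  case 2
  define N where "N = real m * real_of_int U"
  have N: "2 \<le> N" using 2 by (simp add: N_def)
  have "2 * real_of_int U \<le> N * N"
    using N assms(1,2) by (simp add: N_def mult_mono)
  then have "z powr alpha m U \<le> (N * N) powr alpha m U"
    using assms alpha_nonneg_le_1[of m U] by (intro powr_mono2) auto
  also have "\<dots> = exp (2 * (alpha m U * ln N))"
    using N by (simp add: powr_def ln_mult)
  also have "alpha m U * ln N = 1/1000"
    using 2 by (simp add: alpha_def N_def)
  also have "exp (2 * (1/1000)) \<le> (2::real)"
    using exp_bound_half[of "1/500::real"] by simp
  finally show ?thesis .
qed

lemma alpha_bounds_of_interior: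
  fixes f :: "'e \<Rightarrow> real"
  assumes "finite E" "E \<noteq> {}"
    and bd_lo: "\<forall>e\<in>E. \<bar>lo e\<bar> \<le> U" and bd_up: "\<forall>e\<in>E. \<bar>up e\<bar> \<le> U"
    and interior: "\<forall>e\<in>E. real_of_int (lo e) < f e \<and> f e < real_of_int (up e)"
  shows "0 \<le> alpha (card E) U" "alpha (card E) U \<le> 1"
    and "\<forall>e\<in>E. (real_of_int (up e) - f e) powr alpha (card E) U \<le> 2
              \<and> (f e - real_of_int (lo e)) powr alpha (card E) U \<le> 2"
proof -
  obtain e0 where "e0 \<in> E" using assms(2) by blast
  then have "lo e0 < up e0" "\<bar>lo e0\<bar> \<le> U" "\<bar>up e0\<bar> \<le> U"
    using interior bd_lo bd_up by force+
  then have U: "1 \<le> U" by linarith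
  have m: "1 \<le> card E" using assms(1,2) by (simp add: Suc_le_eq card_gt_0_iff)
  show "0 \<le> alpha (card E) U" "alpha (card E) U \<le> 1"
    using alpha_nonneg_le_1[OF m U] by simp_all
  show "\<forall>e\<in>E. (real_of_int (up e) - f e) powr alpha (card E) U \<le> 2
              \<and> (f e - real_of_int (lo e)) powr alpha (card E) U \<le> 2"
    using interior bd_lo bd_up by (force intro!: powr_alpha_le_2[OF m U])
qed

lemma step_length_bounds:
  fixes S D eta kappa :: real
  assumes "0 < kappa" "0 \<le> D" "S / D \<le> -kappa" "eta * S = -(kappa\<^sup>2 / 50)"
  shows "0 < eta" "eta * D \<le> kappa / 50"
proof -
  have "D \<noteq> 0" using assms(1,3) by auto
  then have "0 < D" using assms(2) by simp
  then have S: "S \<le> -kappa * D" using assms(3) by (simp add: divide_le_eq)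
  moreover have "0 < kappa * D" using assms(1) \<open>0 < D\<close> by simp
  ultimately have "S < 0" by linarith
  have "eta * S < 0" using assms(1,4) by simp
  with \<open>S < 0\<close> show eta: "0 < eta" by (simp add: mult_less_0_iff)
  have "eta * S \<le> eta * (-kappa * D)"
    using S eta by (intro mult_left_mono) auto
  then have "kappa * (eta * D) \<le> eta * -S"
    by (simp add: algebra_simps)
  also have "\<dots> = kappa * (kappa / 50)"
    using assms(4) by (simp add: power2_eq_square)
  finally show "eta * D \<le> kappa / 50" using assms(1) by simp
qed

lemma weighted_norm_of_step_le:
  fixes g lt l Delta :: "'e \<Rightarrow> real"
  assumes "0 < kappa"
    and ratio: "(\<Sum>e\<in>E. g e * Delta e) / (\<Sum>e\<in>E. \<bar>lt e * Delta e\<bar>) \<le> - kappa"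
    and eta: "eta * (\<Sum>e\<in>E. g e * Delta e) = - (kappa\<^sup>2 / 50)"
    and l_le: "\<forall>e\<in>E. l e \<le> 2 * lt e"
  shows "(\<Sum>e\<in>E. l e * \<bar>eta * Delta e\<bar>) \<le> kappa / 25"
proof -
  define D where "D = (\<Sum>e\<in>E. \<bar>lt e * Delta e\<bar>)"
  have "0 \<le> D" by (simp add: D_def sum_nonneg)
  then have eta_pos: "0 < eta" and eta_D: "eta * D \<le> kappa / 50"
    using step_length_bounds[OF assms(1) _ ratio[folded D_def] eta] by auto
  have "(\<Sum>e\<in>E. l e * \<bar>eta * Delta e\<bar>) \<le> (\<Sum>e\<in>E. eta * (2 * \<bar>lt e * Delta e\<bar>))"
  proof (rule sum_mono)
    fix e assume "e \<in> E"
    then have "l e * \<bar>Delta e\<bar> \<le> 2 * \<bar>lt e\<bar> * \<bar>Delta e\<bar>"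
      using l_le by (intro mult_right_mono) auto
    then show "l e * \<bar>eta * Delta e\<bar> \<le> eta * (2 * \<bar>lt e * Delta e\<bar>)"
      using eta_pos by (simp add: abs_mult mult_left_mono algebra_simps)
  qed
  also have "\<dots> = 2 * (eta * D)" by (simp add: D_def sum_distrib_left algebra_simps)
  finally show ?thesis using eta_D by linarith
qed

lemma sum_grad_mult_eq:
  "(\<Sum>e\<in>E. grad a Fs E lo up c f e * \<delta> e)
     = 20 * real (card E) / (cost E c f - Fs) * cost E c \<delta>
       + (\<Sum>e\<in>E. a * ((real_of_int (up e) - f e) powr (-1-a) - (f e - real_of_int (lo e)) powr (-1-a)) * \<delta> e)"
proof -
  have "grad a Fs E lo up c f e * \<delta> e
      = 20 * real (card E) / (cost E c f - Fs) * (real_of_int (c e) * \<delta> e)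
        + a * ((real_of_int (up e) - f e) powr (-1-a) - (f e - real_of_int (lo e)) powr (-1-a)) * \<delta> e" for e
    by (simp add: grad_def algebra_simps)
  then show ?thesis by (simp add: cost_def sum.distrib sum_distrib_left)
qed

lemma Phi_second_order_le:
  fixes E :: "'e set" and f \<delta> :: "'e \<Rightarrow> real"
  assumes finE: "finite E"
    and interior: "\<forall>e\<in>E. real_of_int (lo e) < f e \<and> f e < real_of_int (up e)"
    and gap: "Fs < cost E c f"
    and a: "0 \<le> a" "a \<le> 1"
    and slack_powr: "\<forall>e\<in>E. (real_of_int (up e) - f e) powr a \<le> 2 \<and> (f e - real_of_int (lo e)) powr a \<le> 2"
    and small: "(\<Sum>e\<in>E. lens a lo up f e * \<bar>\<delta> e\<bar>) \<le> 1/4"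
    and grad_lb: "-1 \<le> (\<Sum>e\<in>E. grad a Fs E lo up c f e * \<delta> e)"
  shows "Phi a Fs E lo up c (\<lambda>e. f e + \<delta> e) \<le> Phi a Fs E lo up c f
           + (\<Sum>e\<in>E. grad a Fs E lo up c f e * \<delta> e) + 4 * (\<Sum>e\<in>E. lens a lo up f e * \<bar>\<delta> e\<bar>)\<^sup>2"
proof -
  define x where "x e = real_of_int (up e) - f e" for e
  define y where "y e = f e - real_of_int (lo e)" for e
  define barrier_grad where "barrier_grad e = a * (x e powr (-1-a) - y e powr (-1-a))" for e
  define G where "G = cost E c f - Fs"
  define C where "C = cost E c \<delta>"
  define m where "m = real (card E)"
  have lens_eq: "lens a lo up f e = x e powr (-1-a) + y e powr (-1-a)" for e
    by (simp add: lens_def x_def y_def)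
  have G: "0 < G" using gap by (simp add: G_def)
  have grad_split: "(\<Sum>e\<in>E. grad a Fs E lo up c f e * \<delta> e) = 20 * m / G * C + (\<Sum>e\<in>E. barrier_grad e * \<delta> e)"
    unfolding sum_grad_mult_eq by (simp add: m_def G_def C_def barrier_grad_def x_def y_def)
  have "\<bar>\<Sum>e\<in>E. barrier_grad e * \<delta> e\<bar> \<le> 1 * (\<Sum>e\<in>E. lens a lo up f e * \<bar>\<delta> e\<bar>)"
    using a by (intro abs_sum_mult_le_weighted) (simp add: barrier_grad_def lens_eq abs_barrier_grad_le)
  with small have "\<bar>\<Sum>e\<in>E. barrier_grad e * \<delta> e\<bar> \<le> 1/4" by simp
  then have log_grad_lb: "-2 \<le> 20 * m / G * C" using grad_split grad_lb by linarith
  have new_gap: "0 < G + C" \<comment> \<open>the role of grad_lb: ln stays in its domain after the step\<close>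
  proof (cases "C < 0")
    case True
    then have "E \<noteq> {}" by (auto simp: C_def cost_def)
    then have "1 \<le> m" using finE by (simp add: m_def Suc_le_eq card_gt_0_iff)
    then have "20 * m / G * C \<le> 20 * C / G"
      using True G by (simp add: divide_simps mult_right_mono_neg)
    then have "-2 \<le> 20 * C / G" using log_grad_lb by linarith
    then show ?thesis using G by (simp add: divide_simps)
  qed (use G in simp)
  have "ln (G + C) \<le> ln G + C / G" using G new_gap by (rule ln_le_tangent)
  then have "20 * m * ln (G + C) \<le> 20 * m * (ln G + C / G)"
    by (simp add: m_def mult_left_mono)
  then have log_step: "20 * m * ln (G + C) \<le> 20 * m * ln G + 20 * m / G * C"
    by (simp add: algebra_simps)
  have barrier_step: "(\<Sum>e\<in>E. (x e - \<delta> e) powr (-a) + (y e + \<delta> e) powr (-a))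
    \<le> (\<Sum>e\<in>E. x e powr (-a) + y e powr (-a)) + (\<Sum>e\<in>E. barrier_grad e * \<delta> e)
      + 4 * (\<Sum>e\<in>E. lens a lo up f e * \<bar>\<delta> e\<bar>)\<^sup>2"
    using barrier_sum_second_order_le[OF finE a, of x y \<delta>] interior slack_powr small
    by (simp add: x_def y_def barrier_grad_def lens_eq mult.assoc)
  have "cost E c (\<lambda>e. f e + \<delta> e) - Fs = G + C"
    by (simp add: cost_def G_def C_def distrib_left sum.distrib)
  then have "Phi a Fs E lo up c (\<lambda>e. f e + \<delta> e)
      = 20 * m * ln (G + C) + (\<Sum>e\<in>E. (x e - \<delta> e) powr (-a) + (y e + \<delta> e) powr (-a))"
    by (simp add: Phi_def m_def x_def y_def algebra_simps)
  moreover have "Phi a Fs E lo up c f = 20 * m * ln G + (\<Sum>e\<in>E. x e powr (-a) + y e powr (-a))"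
    by (simp add: Phi_def m_def x_def y_def G_def)
  ultimately show ?thesis using grad_split log_step barrier_step by linarith
qed

lemma Phi_decrease_of_step:
  fixes E :: "'e set" and f gt \<delta> :: "'e \<Rightarrow> real"
  assumes finE: "finite E"
    and interior: "\<forall>e\<in>E. real_of_int (lo e) < f e \<and> f e < real_of_int (up e)"
    and gap: "Fs < cost E c f"
    and a: "0 \<le> a" "a \<le> 1"
    and slack_powr: "\<forall>e\<in>E. (real_of_int (up e) - f e) powr a \<le> 2 \<and> (f e - real_of_int (lo e)) powr a \<le> 2"
    and kappa: "0 < kappa" "kappa < 1"
    and gt: "\<forall>e\<in>E. \<bar>gt e - grad a Fs E lo up c f e\<bar> / lens a lo up f e \<le> kappa / 8"
    and descent: "(\<Sum>e\<in>E. gt e * \<delta> e) = - (kappa\<^sup>2 / 50)"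
    and short: "(\<Sum>e\<in>E. lens a lo up f e * \<bar>\<delta> e\<bar>) \<le> kappa / 25"
  shows "Phi a Fs E lo up c (\<lambda>e. f e + \<delta> e) \<le> Phi a Fs E lo up c f - kappa\<^sup>2 / 500"
proof -
  define R where "R = (\<Sum>e\<in>E. lens a lo up f e * \<bar>\<delta> e\<bar>)"
  have "\<bar>(\<Sum>e\<in>E. grad a Fs E lo up c f e * \<delta> e) - (\<Sum>e\<in>E. gt e * \<delta> e)\<bar> \<le> kappa / 8 * R"
    unfolding R_def using gt interior by (intro abs_sum_mult_diff_le_weighted) (auto simp: lens_pos)
  then have grad_step: "\<bar>(\<Sum>e\<in>E. grad a Fs E lo up c f e * \<delta> e) + kappa\<^sup>2 / 50\<bar> \<le> kappa / 8 * R"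
    using descent by simp
  have "0 \<le> R" by (simp add: R_def lens_def sum_nonneg)
  then have "kappa * R \<le> kappa * (kappa / 25)" and "R\<^sup>2 \<le> (kappa / 25)\<^sup>2"
    and kappa_sq: "kappa\<^sup>2 \<le> 1"
    using short kappa by (auto intro: mult_left_mono power_mono simp: R_def power_le_one)
  then have kappa_R: "kappa * R \<le> kappa\<^sup>2 / 25" and R_sq: "R\<^sup>2 \<le> kappa\<^sup>2 / 625"
    by (simp_all add: power2_eq_square power_divide)
  have "Phi a Fs E lo up c (\<lambda>e. f e + \<delta> e)
      \<le> Phi a Fs E lo up c f + (\<Sum>e\<in>E. grad a Fs E lo up c f e * \<delta> e) + 4 * R\<^sup>2"
    unfolding R_def
  proof (rule Phi_second_order_le[OF finE interior gap a slack_powr])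
    show "(\<Sum>e\<in>E. lens a lo up f e * \<bar>\<delta> e\<bar>) \<le> 1/4" using short kappa by simp
    show "-1 \<le> (\<Sum>e\<in>E. grad a Fs E lo up c f e * \<delta> e)"
      using grad_step[unfolded abs_le_iff] kappa_R kappa_sq by linarith
  qed
  with grad_step[unfolded abs_le_iff] kappa_R R_sq show ?thesis by linarith
qed

theorem lemma4p4:
  fixes V :: "'v set" and E :: "'e set" and src tgt :: "'e \<Rightarrow> 'v"
    and d :: "'v \<Rightarrow> int" and lo up c :: "'e \<Rightarrow> int" and U :: int
    and f gt lt Delta :: "'e \<Rightarrow> real" and kappa eta :: real
  assumes finV: "finite V" and finE: "finite E"
    and ends: "\<forall>e\<in>E. src e \<in> V \<and> tgt e \<in> V"
    and bd_d: "\<forall>v\<in>V. \<bar>d v\<bar> \<le> U"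
    and bd_lo: "\<forall>e\<in>E. \<bar>lo e\<bar> \<le> U" and bd_up: "\<forall>e\<in>E. \<bar>up e\<bar> \<le> U"
    and bd_c: "\<forall>e\<in>E. \<bar>c e\<bar> \<le> U"
    and f_int: "\<forall>e\<in>E. real_of_int (lo e) < f e \<and> f e < real_of_int (up e)"
    and f_gap: "cost E c f > Fstar V E src tgt d lo up c"
    and kappa: "0 < kappa" "kappa < 1"
    and gt: "\<forall>e\<in>E. \<bar>gt e - grad (alpha (card E) U) (Fstar V E src tgt d lo up c) E lo up c f e\<bar>
                      / lens (alpha (card E) U) lo up f e \<le> kappa / 8"
    and lt_pos: "\<forall>e\<in>E. lt e > 0"
    and lt_approx: "\<forall>e\<in>E. lens (alpha (card E) U) lo up f e / 2 \<le> lt e \<and>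
                           lt e \<le> 2 * lens (alpha (card E) U) lo up f e"
    and circ: "\<forall>v\<in>V. BT E src tgt Delta v = 0"
    and ratio: "(\<Sum>e\<in>E. gt e * Delta e) / (\<Sum>e\<in>E. \<bar>lt e * Delta e\<bar>) \<le> - kappa"
    and eta: "eta * (\<Sum>e\<in>E. gt e * Delta e) = - (kappa^2 / 50)"
  shows "Phi (alpha (card E) U) (Fstar V E src tgt d lo up c) E lo up c (\<lambda>e. f e + eta * Delta e)
         \<le> Phi (alpha (card E) U) (Fstar V E src tgt d lo up c) E lo up c f - kappa^2 / 500"
proof -
  have "E \<noteq> {}" using eta kappa by auto
  note alpha = alpha_bounds_of_interior[OF finE this bd_lo bd_up f_int]
  have descent: "(\<Sum>e\<in>E. gt e * (eta * Delta e)) = - (kappa\<^sup>2 / 50)"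
    using eta by (simp add: sum_distrib_left algebra_simps)
  have short: "(\<Sum>e\<in>E. lens (alpha (card E) U) lo up f e * \<bar>eta * Delta e\<bar>) \<le> kappa / 25"
    using lt_approx by (intro weighted_norm_of_step_le[OF kappa(1) ratio eta]) auto
  show ?thesis
    using Phi_decrease_of_step[OF finE f_int f_gap alpha kappa gt descent short] .
qed

end
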